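(* Let $X$ be an infinite-dimensional complex Banach space and let $\phi:\mathcal{B}(X)\to\mathcal{B}(X)$ be a surjective map such that $K(\phi(T)\phi(S)+\phi(S)\phi(T))=K(TS+ST)$ for all $T,S\in\mathcal{B}(X)$. Then for every $F\in\mathcal{B}(X)$, $\phi(F)$ has rank one if and only if $F$ has rank one.
   Context: $\mathcal{B}(X)$ denotes the algebra of all bounded linear operators on $X$. For $T\in\mathcal{B}(X)$, the analytic core $K(T)$ is the set of all $x\in X$ for which there exist $\delta>0$ and a sequence $(x_n)_{n\ge 0}\subset X$ with $x_0=x$, $Tx_{n+1}=x_n$ and $\|x_n\|\le \delta^n\|x\|$ for all $n\ge 0$. *)

theory Defs
  imports "HOL-Analysis.Analysis"
begin

text \<open>Complex vector spaces / complex Banach spaces (not in the distribution library;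
  modelled as in the AFP entry Complex_Bounded_Operators): a real Banach space whose
  real scalar multiplication is the restriction of a complex one, with absolutely
  homogeneous norm.\<close>

class scaleC =
  fixes scaleC :: "complex \<Rightarrow> 'a \<Rightarrow> 'a" (infixr "*\<^sub>C" 75)

class complex_banach = scaleC + banach +
  assumes scaleC_add_right: "a *\<^sub>C (x + y) = a *\<^sub>C x + a *\<^sub>C y"
    and scaleC_add_left: "(a + b) *\<^sub>C x = a *\<^sub>C x + b *\<^sub>C x"
    and scaleC_scaleC: "a *\<^sub>C (b *\<^sub>C x) = (a * b) *\<^sub>C x"
    and scaleC_one: "1 *\<^sub>C x = x"
    and scaleR_scaleC: "r *\<^sub>R x = (complex_of_real r) *\<^sub>C x"
    and norm_scaleC: "norm (a *\<^sub>C x) = cmod a * norm x"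

definition BX :: "('a::complex_banach \<Rightarrow> 'a) set" where
  "BX = {T. bounded_linear T \<and> (\<forall>c x. T (c *\<^sub>C x) = c *\<^sub>C T x)}"

definition complex_finite_dim :: "'a::complex_banach itself \<Rightarrow> bool" where
  "complex_finite_dim _ \<longleftrightarrow>
     (\<exists>B::'a set. finite B \<and> (\<forall>x. \<exists>c. x = (\<Sum>b\<in>B. c b *\<^sub>C b)))"

definition analytic_core :: "('a::complex_banach \<Rightarrow> 'a) \<Rightarrow> 'a set" where
  "analytic_core T = {x. \<exists>\<delta>>0. \<exists>xs::nat \<Rightarrow> 'a. xs 0 = x \<and>
      (\<forall>n. T (xs (Suc n)) = xs n) \<and> (\<forall>n. norm (xs n) \<le> \<delta> ^ n * norm x)}"

definition rank_one :: "('a::complex_banach \<Rightarrow> 'a) \<Rightarrow> bool" where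
  "rank_one T \<longleftrightarrow> (\<exists>y. y \<noteq> 0 \<and> range T = {c *\<^sub>C y | c. True})"

end

theory Submission
  imports Defs
begin

text \<open>The map \<open>\<phi>\<close> preserves, for each \<open>A\<close>, the family of analytic cores \<open>K(AR + RA)\<close>,
  \<open>R \<in> B(X)\<close>, so it suffices to read off from this family whether \<open>A\<close> has rank one. If \<open>A\<close> has
  rank one with range \<open>\<complex>y\<close>, some core is nonzero and every core lies in \<open>\<complex>y + \<complex>Ry\<close>, a space of
  real dimension at most four. If \<open>A\<close> has rank at least two, some core contains five real-linearly
  independent vectors. Either there are \<open>x\<^sub>1, x\<^sub>2\<close> such that \<open>x\<^sub>1, x\<^sub>2, Ax\<^sub>1, Ax\<^sub>2\<close> are in general
  position, and a rank-two \<open>R\<close> makes \<open>AR + RA\<close> act as a Jordan block on \<open>span{x\<^sub>1, x\<^sub>2, Ax\<^sub>1}\<close>; or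
  no such pair exists, which forces \<open>A = \<mu>I + (finite rank)\<close>. For \<open>\<mu> \<noteq> 0\<close> the infinite-dimensional
  eigenspace of \<open>\<mu>\<close> lies in the core of \<open>AR + RA\<close> with \<open>R = I/(2\<mu>)\<close>; for \<open>\<mu> = 0\<close> shifting
  \<open>x\<^sub>1, x\<^sub>2\<close> by kernel vectors produces such a pair after all. The bounded functionals needed to
  build \<open>R\<close> come from a Hahn--Banach argument for finite-dimensional subspaces.\<close>

lemma scaleC_zero_left [simp]: "(0::complex) *\<^sub>C (x::'a::complex_banach) = 0"
  by (metis scaleR_scaleC of_real_0 scaleR_zero_left)

lemma scaleC_zero_right [simp]: "c *\<^sub>C (0::'a::complex_banach) = 0"
  by (metis add_cancel_right_right scaleC_add_right add_0_right)

lemma scaleC_minus_left: "(- c) *\<^sub>C (x::'a::complex_banach) = - (c *\<^sub>C x)"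
  by (metis add_eq_0_iff2 neg_eq_iff_add_eq_0 scaleC_add_left scaleC_zero_left)

lemma scaleC_diff_left: "(c - d) *\<^sub>C (x::'a::complex_banach) = c *\<^sub>C x - d *\<^sub>C x"
  by (metis diff_conv_add_uminus scaleC_add_left scaleC_minus_left)

lemma scaleC_minus_right: "c *\<^sub>C (- x) = - (c *\<^sub>C (x::'a::complex_banach))"
  by (metis add_eq_0_iff2 neg_eq_iff_add_eq_0 scaleC_add_right scaleC_zero_right)

lemma scaleC_diff_right: "c *\<^sub>C (x - y) = c *\<^sub>C x - c *\<^sub>C (y::'a::complex_banach)"
  by (metis diff_conv_add_uminus scaleC_add_right scaleC_minus_right)

lemma scaleC_scaleR_commute: "c *\<^sub>C (r *\<^sub>R x) = r *\<^sub>R (c *\<^sub>C (x::'a::complex_banach))"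
  by (simp add: scaleR_scaleC scaleC_scaleC mult.commute)

lemma scaleC_Re_Im: "c *\<^sub>C (x::'a::complex_banach) = Re c *\<^sub>R x + Im c *\<^sub>R (\<i> *\<^sub>C x)"
proof -
  have "c = complex_of_real (Re c) + complex_of_real (Im c) * \<i>"
    by (simp add: complex_eq_iff)
  then have "c *\<^sub>C x = (complex_of_real (Re c) + complex_of_real (Im c) * \<i>) *\<^sub>C x" by simp
  also have "\<dots> = Re c *\<^sub>R x + Im c *\<^sub>R (\<i> *\<^sub>C x)"
    by (simp add: scaleC_add_left scaleR_scaleC scaleC_scaleC)
  finally show ?thesis .
qed

lemma scaleC_half_twice: "(1/2) *\<^sub>C x + (1/2) *\<^sub>C x = (x::'a::complex_banach)"
  by (simp add: scaleC_add_left [symmetric] scaleC_one)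

lemma bounded_linear_scaleC: "bounded_linear (\<lambda>x::'a::complex_banach. c *\<^sub>C x)"
  by (rule bounded_linear_intro [where K = "cmod c"])
    (simp_all add: scaleC_add_right scaleC_scaleR_commute norm_scaleC mult.commute)

lemma bounded_linear_scaleC_left: "bounded_linear (\<lambda>c::complex. c *\<^sub>C (x::'a::complex_banach))"
  by (rule bounded_linear_intro [where K = "norm x"])
    (simp_all add: scaleC_add_left scaleR_scaleC scaleC_scaleC norm_scaleC scaleR_conv_of_real)

section \<open>Complex spans as real spans\<close>

definition cspan :: "'a::complex_banach set \<Rightarrow> 'a set" where
  "cspan S = span (S \<union> (\<lambda>x. \<i> *\<^sub>C x) ` S)"

lemma cspan_insert_eq:
  "cspan (insert b S) = span (insert b (insert (\<i> *\<^sub>C b) (S \<union> (\<lambda>x. \<i> *\<^sub>C x) ` S)))"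
  unfolding cspan_def by (simp add: insert_commute)

lemma cspan_mono: "S \<subseteq> T \<Longrightarrow> cspan S \<subseteq> cspan T"
  unfolding cspan_def by (intro span_mono) auto

lemma cspan_empty [simp]: "cspan {} = {0}"
  by (simp add: cspan_def)

lemma cspan_base: "b \<in> S \<Longrightarrow> b \<in> cspan S"
  unfolding cspan_def by (simp add: span_base)

lemma cspan_add: "x \<in> cspan S \<Longrightarrow> y \<in> cspan S \<Longrightarrow> x + y \<in> cspan S"
  unfolding cspan_def by (rule span_add)

lemma cspan_diff: "x \<in> cspan S \<Longrightarrow> y \<in> cspan S \<Longrightarrow> x - y \<in> cspan S"
  unfolding cspan_def by (rule span_diff)

lemma cspan_zero: "0 \<in> cspan S"
  unfolding cspan_def by (rule span_zero)

lemma cspan_i_scaleC: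
  assumes "x \<in> cspan S" shows "\<i> *\<^sub>C x \<in> cspan S"
proof -
  let ?i = "\<lambda>x::'a. \<i> *\<^sub>C x"
  have lin: "linear ?i"
    using bounded_linear_scaleC bounded_linear.linear by blast
  have "?i ` (S \<union> ?i ` S) \<subseteq> ?i ` S \<union> uminus ` S"
    by (auto simp: scaleC_scaleC scaleC_minus_left scaleC_one)
  also have "\<dots> \<subseteq> span (S \<union> ?i ` S)"
    by (auto intro: span_base span_neg)
  finally have "span (?i ` (S \<union> ?i ` S)) \<subseteq> span (S \<union> ?i ` S)"
    by (simp add: span_minimal)
  then show ?thesis
    using assms span_linear_image [OF lin, of "S \<union> ?i ` S"] unfolding cspan_def by blast
qed

lemma cspan_scaleC:
  assumes "x \<in> cspan S" shows "c *\<^sub>C x \<in> cspan S"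
  using span_add [OF span_scale span_scale] assms cspan_i_scaleC [OF assms]
  unfolding scaleC_Re_Im [of c x] cspan_def by blast

lemma cspan_breakdown_eq: "x \<in> cspan (insert b S) \<longleftrightarrow> (\<exists>c. x - c *\<^sub>C b \<in> cspan S)"
proof
  assume "x \<in> cspan (insert b S)"
  then obtain r where "x - r *\<^sub>R b \<in> span (insert (\<i> *\<^sub>C b) (S \<union> (\<lambda>x. \<i> *\<^sub>C x) ` S))"
    unfolding cspan_insert_eq span_breakdown_eq by blast
  then obtain s where "x - r *\<^sub>R b - s *\<^sub>R (\<i> *\<^sub>C b) \<in> cspan S"
    unfolding span_breakdown_eq cspan_def by blast
  moreover have "Complex r s *\<^sub>C b = r *\<^sub>R b + s *\<^sub>R (\<i> *\<^sub>C b)"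
    using scaleC_Re_Im [of "Complex r s" b] by simp
  ultimately show "\<exists>c. x - c *\<^sub>C b \<in> cspan S"
    by (metis diff_diff_eq)
next
  assume "\<exists>c. x - c *\<^sub>C b \<in> cspan S"
  then obtain c where "x - c *\<^sub>C b \<in> cspan (insert b S)"
    using cspan_mono [of S "insert b S"] by blast
  moreover have "c *\<^sub>C b \<in> cspan (insert b S)"
    by (intro cspan_scaleC cspan_base) simp
  ultimately have "(x - c *\<^sub>C b) + c *\<^sub>C b \<in> cspan (insert b S)"
    by (rule cspan_add)
  then show "x \<in> cspan (insert b S)" by simp
qed

lemma cspan_singleton: "cspan {b} = {c *\<^sub>C b | c. True}"
  using cspan_breakdown_eq [of _ b "{}"] by auto

lemma cspan_scaleC_cancel:
  assumes "k \<notin> cspan S" "c *\<^sub>C k \<in> cspan S" shows "c = 0"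
proof (rule ccontr)
  assume "c \<noteq> 0"
  then have "inverse c *\<^sub>C (c *\<^sub>C k) = k" by (simp add: scaleC_scaleC scaleC_one)
  then show False using cspan_scaleC [OF assms(2), of "inverse c"] assms(1) by simp
qed

lemma cspan_lincomb_cancel:
  assumes "k \<notin> cspan S" "u \<in> cspan S" "c *\<^sub>C k + u \<in> cspan S" shows "c = 0"
  using cspan_diff [OF assms(3,2)] cspan_scaleC_cancel [OF assms(1)] by simp

lemma cspan_add_notin: "x \<in> cspan S \<Longrightarrow> y \<notin> cspan S \<Longrightarrow> x + y \<notin> cspan S"
  using cspan_diff [of "x + y" S x] by auto

lemma cspan_exchange:
  assumes a: "a \<notin> cspan S" and b: "b \<notin> cspan (insert a S)"
  shows "a \<notin> cspan (insert b S)"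
proof
  assume "a \<in> cspan (insert b S)"
  then obtain c where c: "a - c *\<^sub>C b \<in> cspan S" using cspan_breakdown_eq by blast
  with a have "c \<noteq> 0" by auto
  then have "b = (1/c) *\<^sub>C a - (1/c) *\<^sub>C (a - c *\<^sub>C b)"
    by (simp add: scaleC_diff_right scaleC_scaleC scaleC_one)
  also have "\<dots> \<in> cspan (insert a S)"
  proof (rule cspan_diff)
    show "(1/c) *\<^sub>C a \<in> cspan (insert a S)" by (intro cspan_scaleC cspan_base) simp
    show "(1/c) *\<^sub>C (a - c *\<^sub>C b) \<in> cspan (insert a S)"
      using cspan_scaleC [OF c] cspan_mono [of S "insert a S"] by blast
  qed
  finally show False using b by contradiction
qed

lemma i_scaleC_notin_span_insert:
  assumes "k \<notin> cspan S" shows "\<i> *\<^sub>C k \<notin> span (insert k (S \<union> (\<lambda>x. \<i> *\<^sub>C x) ` S))"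
proof
  assume "\<i> *\<^sub>C k \<in> span (insert k (S \<union> (\<lambda>x. \<i> *\<^sub>C x) ` S))"
  then obtain r where "\<i> *\<^sub>C k - r *\<^sub>R k \<in> cspan S"
    unfolding span_breakdown_eq cspan_def by blast
  then have "(\<i> - complex_of_real r) *\<^sub>C k \<in> cspan S" by (simp add: scaleC_diff_left scaleR_scaleC)
  then have "\<i> - complex_of_real r = 0" using cspan_scaleC_cancel assms by blast
  then show False by (simp add: complex_eq_iff)
qed

section \<open>Analytic cores\<close>

lemma analytic_core_subset_range: "analytic_core B \<subseteq> range B"
proof
  fix x assume "x \<in> analytic_core B"
  then obtain xs where "xs 0 = x" "\<forall>n. B (xs (Suc n)) = xs n"
    unfolding analytic_core_def by blast
  then show "x \<in> range B" by (metis rangeI)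
qed

lemma fixed_point_in_analytic_core: "B v = v \<Longrightarrow> v \<in> analytic_core B"
  unfolding analytic_core_def by (auto intro!: exI [of _ 1] exI [of _ "\<lambda>n. v"])

lemma analytic_core_zero: "analytic_core (\<lambda>x::'a::complex_banach. 0) = {0}"
  using analytic_core_subset_range [of "\<lambda>x::'a. 0"] fixed_point_in_analytic_core [of "\<lambda>x::'a. 0" 0]
  by auto

text \<open>A bounded right inverse \<open>C\<close> of \<open>B\<close> on an invariant set supplies the backward orbits
  \<open>x, C x, C\<^sup>2 x, \<dots>\<close> with geometric norm bounds.\<close>

lemma subset_analytic_core_if_bounded_right_inverse:
  assumes C: "bounded_linear C" and inv: "\<And>v. v \<in> V \<Longrightarrow> C v \<in> V"
    and right_inverse: "\<And>v. v \<in> V \<Longrightarrow> B (C v) = v"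
  shows "V \<subseteq> analytic_core B"
proof
  fix x assume x: "x \<in> V"
  obtain K where K: "K > 0" "\<And>y. norm (C y) \<le> norm y * K"
    using bounded_linear.pos_bounded [OF C] by blast
  define xs where "xs n = (C ^^ n) x" for n
  have xs_in: "xs n \<in> V" for n by (induction n) (auto simp: xs_def x inv)
  have "B (xs (Suc n)) = xs n" for n
    using right_inverse [OF xs_in [of n]] by (simp add: xs_def)
  moreover have "norm (xs n) \<le> K ^ n * norm x" for n
  proof (induction n)
    case (Suc n)
    have "norm (xs (Suc n)) \<le> norm (xs n) * K" using K(2) [of "xs n"] by (simp add: xs_def)
    also have "\<dots> \<le> K ^ n * norm x * K" using Suc K(1) by (simp add: mult_right_mono)
    finally show ?case by (simp add: mult_ac)
  qed (simp add: xs_def)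
  ultimately show "x \<in> analytic_core B"
    unfolding analytic_core_def using K(1) by (auto intro!: exI [of _ K] exI [of _ xs] simp: xs_def)
qed

section \<open>Infinite dimension and finite-rank operators\<close>

lemma not_complex_finite_dim_imp_notin_span:
  assumes "\<not> complex_finite_dim TYPE('a::complex_banach)" "finite (T::'a set)"
  shows "\<exists>x::'a. x \<notin> span T"
proof (rule ccontr)
  assume "\<nexists>x::'a. x \<notin> span T"
  then have "x \<in> range (\<lambda>u. \<Sum>v\<in>T. u v *\<^sub>R v)" for x :: 'a
    using span_finite [OF assms(2)] by blast
  then have "\<exists>c. x = (\<Sum>b\<in>T. c b *\<^sub>C b)" for x :: 'a
  proof
    fix u assume "x = (\<Sum>v\<in>T. u v *\<^sub>R v)"
    then show ?thesis by (intro exI [of _ "\<lambda>b. complex_of_real (u b)"]) (simp add: scaleR_scaleC)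
  qed
  then show False
    using assms unfolding complex_finite_dim_def by blast
qed

lemma not_complex_finite_dim_imp_notin_cspan:
  assumes "\<not> complex_finite_dim TYPE('a::complex_banach)" "finite (T::'a set)"
  shows "\<exists>x::'a. x \<notin> cspan T"
  using not_complex_finite_dim_imp_notin_span [OF assms(1), of "T \<union> (\<lambda>x. \<i> *\<^sub>C x) ` T"] assms(2)
  unfolding cspan_def by blast

lemma finite_rank_kernel_notin_span:
  fixes N :: "'a::real_vector \<Rightarrow> 'b::real_vector"
  assumes N: "linear N" and F: "finite F" and range: "\<And>x. N x \<in> span F"
    and inf: "\<And>T::'a set. finite T \<Longrightarrow> \<exists>x. x \<notin> span T" and T: "finite T"
  shows "\<exists>k. N k = 0 \<and> k \<notin> span T"
proof (rule ccontr)
  assume "\<nexists>k. N k = 0 \<and> k \<notin> span T"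
  then have ker: "\<And>k. N k = 0 \<Longrightarrow> k \<in> span T" by blast
  obtain B where B: "B \<subseteq> range N" "independent B" "range N \<subseteq> span B"
    by (rule basis_exists)
  have "finite B" using independent_span_bound [OF F B(2)] B(1) range by blast
  define P where "P = inv N ` B"
  have "N ` P = B"
  proof -
    have "(\<lambda>b. N (inv N b)) ` B = (\<lambda>b. b) ` B"
      by (rule image_cong) (use B(1) in \<open>auto simp: f_inv_into_f\<close>)
    then show ?thesis unfolding P_def image_image by simp
  qed
  have "x \<in> span (T \<union> P)" for x
  proof -
    have "N x \<in> N ` span P"
      using B(3) span_linear_image [OF N, of P] \<open>N ` P = B\<close> by blast
    then obtain p where p: "p \<in> span P" "N x = N p" by blast
    then have "x - p \<in> span T" using ker linear_diff [OF N] by simp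
    then have "(x - p) + p \<in> span (T \<union> P)"
      using p(1) span_mono [of T "T \<union> P"] span_mono [of P "T \<union> P"] by (blast intro: span_add)
    then show ?thesis by simp
  qed
  moreover have "finite (T \<union> P)" using T \<open>finite B\<close> by (simp add: P_def)
  ultimately show False using inf by blast
qed

lemma independent_insert_card:
  assumes "a \<notin> span S" "independent S" "finite S"
  shows "independent (insert a S) \<and> card (insert a S) = Suc (card S)"
proof -
  have "a \<notin> S" using assms(1) span_base by blast
  then show ?thesis using assms by (simp add: independent_insertI)
qed

lemma finite_rank_kernel_independent:
  fixes N :: "'a::real_vector \<Rightarrow> 'b::real_vector"
  assumes N: "linear N" and F: "finite F" and range: "\<And>x. N x \<in> span F"
    and inf: "\<And>T::'a set. finite T \<Longrightarrow> \<exists>x. x \<notin> span T"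
  shows "\<exists>V. finite V \<and> independent V \<and> card V = n \<and> (\<forall>v\<in>V. N v = 0)"
proof (induction n)
  case 0
  show ?case by (intro exI [of _ "{}"]) (simp add: independent_empty)
next
  case (Suc n)
  then obtain V where V: "finite V" "independent V" "card V = n" "\<forall>v\<in>V. N v = 0" by blast
  obtain k where "N k = 0" "k \<notin> span V"
    using finite_rank_kernel_notin_span [OF N F range inf V(1)] by blast
  then show ?case
    using independent_insert_card [of k V] V by (intro exI [of _ "insert k V"]) auto
qed

definition spanned_by_at_most :: "nat \<Rightarrow> 'a::real_vector set \<Rightarrow> bool" where
  "spanned_by_at_most n K \<longleftrightarrow> (\<exists>S. finite S \<and> card S \<le> n \<and> K \<subseteq> span S)"

lemma spanned_by_at_most_independent_card:
  assumes "spanned_by_at_most n K" "independent V" "V \<subseteq> K"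
  shows "card V \<le> n"
  using assms independent_span_bound unfolding spanned_by_at_most_def by fastforce

section \<open>Bounded functionals on normed spaces\<close>

lemma abs_scale_infdist_le_norm:
  fixes a :: "'a::real_normed_vector"
  assumes m: "m \<in> span S"
  shows "\<bar>t\<bar> * infdist a (span S) \<le> norm (m + t *\<^sub>R a)"
proof (cases "t = 0")
  case False
  have "- ((1/t) *\<^sub>R m) \<in> span S" using m by (simp add: span_neg span_scale)
  then have "infdist a (span S) \<le> norm (a + (1/t) *\<^sub>R m)"
    using infdist_le by (fastforce simp: dist_norm)
  then have "\<bar>t\<bar> * infdist a (span S) \<le> \<bar>t\<bar> * norm (a + (1/t) *\<^sub>R m)"
    by (simp add: mult_left_mono)
  also have "\<dots> = norm (m + t *\<^sub>R a)"
    using False by (simp flip: norm_scaleR add: scaleR_add_right add.commute)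
  finally show ?thesis .
qed simp

lemma Cauchy_if_dominated_by_Cauchy:
  fixes t :: "nat \<Rightarrow> real" and f :: "nat \<Rightarrow> 'a::real_normed_vector"
  assumes "Cauchy f" "d > 0" "\<And>m n. \<bar>t m - t n\<bar> * d \<le> norm (f m - f n)"
  shows "Cauchy t"
proof (rule metric_CauchyI)
  fix e :: real assume "e > 0"
  then obtain M where M: "\<And>m n. m \<ge> M \<Longrightarrow> n \<ge> M \<Longrightarrow> dist (f m) (f n) < e * d"
    using metric_CauchyD [OF assms(1), of "e * d"] assms(2) by auto
  have "dist (t m) (t n) < e" if "m \<ge> M" "n \<ge> M" for m n
  proof -
    have "\<bar>t m - t n\<bar> * d < e * d"
      using assms(3) [of m n] M [OF that] by (simp add: dist_norm)
    then show ?thesis using assms(2) by (simp add: dist_real_def)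
  qed
  then show "\<exists>M. \<forall>m\<ge>M. \<forall>n\<ge>M. dist (t m) (t n) < e" by blast
qed

lemma closed_span_finite:
  fixes S :: "'a::real_normed_vector set"
  assumes "finite S" shows "closed (span S)"
  using assms
proof (induction S rule: finite_induct)
  case (insert a S)
  show ?case
  proof (cases "a \<in> span S")
    case True
    then show ?thesis using insert by (simp add: span_redundant)
  next
    case False
    let ?d = "infdist a (span S)"
    have d: "?d > 0"
      using infdist_pos_not_in_closed [OF insert.IH _ False] span_zero by blast
    show ?thesis unfolding closed_sequential_limits
    proof (intro allI impI, elim conjE)
      fix f l assume f: "\<forall>n. f n \<in> span (insert a S)" and lim: "f \<longlonglongrightarrow> l"
      have "\<forall>n. \<exists>t. f n - t *\<^sub>R a \<in> span S" using f span_breakdown_eq by blast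
      then obtain t where t: "\<And>n. f n - t n *\<^sub>R a \<in> span S" by metis
      have "\<bar>t m - t n\<bar> * ?d \<le> norm (f m - f n)" for m n
      proof -
        have "\<bar>t m - t n\<bar> * ?d \<le> norm ((f m - t m *\<^sub>R a) - (f n - t n *\<^sub>R a) + (t m - t n) *\<^sub>R a)"
          by (rule abs_scale_infdist_le_norm) (rule span_diff [OF t t])
        then show ?thesis by (simp add: algebra_simps)
      qed
      then have "Cauchy t"
        using Cauchy_if_dominated_by_Cauchy [OF LIMSEQ_imp_Cauchy [OF lim] d] by blast
      then obtain \<tau> where "t \<longlonglongrightarrow> \<tau>" using Cauchy_convergent_iff convergent_def by blast
      then have "(\<lambda>n. f n - t n *\<^sub>R a) \<longlonglongrightarrow> l - \<tau> *\<^sub>R a"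
        by (intro tendsto_intros lim)
      then have "l - \<tau> *\<^sub>R a \<in> span S"
        by (rule closed_sequentially [OF insert.IH, rotated]) (rule t)
      then show "l \<in> span (insert a S)" using span_breakdown_eq by blast
    qed
  qed
qed simp

text \<open>The Hahn--Banach argument is run on graphs of partial linear functionals, which lets Zorn's
  lemma work with plain sets ordered by inclusion.\<close>

definition dominated_linear_graph :: "real \<Rightarrow> ('a::real_normed_vector \<times> real) set \<Rightarrow> bool" where
  "dominated_linear_graph C G \<longleftrightarrow>
     (\<forall>a r s. (a, r) \<in> G \<longrightarrow> (a, s) \<in> G \<longrightarrow> r = s) \<and>
     (\<forall>a b r s. (a, r) \<in> G \<longrightarrow> (b, s) \<in> G \<longrightarrow> (a + b, r + s) \<in> G) \<and>
     (\<forall>a r c. (a, r) \<in> G \<longrightarrow> (c *\<^sub>R a, c * r) \<in> G) \<and>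
     (\<forall>a r. (a, r) \<in> G \<longrightarrow> r \<le> C * norm a)"

lemma dominated_linear_graphD:
  assumes "dominated_linear_graph C G"
  shows "(a, r) \<in> G \<Longrightarrow> (a, s) \<in> G \<Longrightarrow> r = s"
    and "(a, r) \<in> G \<Longrightarrow> (b, s) \<in> G \<Longrightarrow> (a + b, r + s) \<in> G"
    and "(a, r) \<in> G \<Longrightarrow> (c *\<^sub>R a, c * r) \<in> G"
    and "(a, r) \<in> G \<Longrightarrow> r \<le> C * norm a"
  using assms unfolding dominated_linear_graph_def by blast+

lemma dominated_linear_graph_Union_chain:
  assumes "chain\<^sub>\<subseteq> Ch" and "\<forall>G\<in>Ch. dominated_linear_graph C G"
  shows "dominated_linear_graph C (\<Union>Ch)"
proof -
  have two: "\<exists>G\<in>Ch. p \<in> G \<and> q \<in> G" if "p \<in> \<Union>Ch" "q \<in> \<Union>Ch" for p q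
    using that assms(1) unfolding chain_subset_def by blast
  show ?thesis
    unfolding dominated_linear_graph_def
  proof (intro conjI allI impI)
    fix a r s assume "(a, r) \<in> \<Union>Ch" "(a, s) \<in> \<Union>Ch"
    then obtain G where "G \<in> Ch" "(a, r) \<in> G" "(a, s) \<in> G" using two by blast
    then show "r = s" using assms(2) dominated_linear_graphD(1) by blast
  next
    fix a b r s assume "(a, r) \<in> \<Union>Ch" "(b, s) \<in> \<Union>Ch"
    then obtain G where "G \<in> Ch" "(a, r) \<in> G" "(b, s) \<in> G" using two by blast
    then show "(a + b, r + s) \<in> \<Union>Ch" using assms(2) dominated_linear_graphD(2) by blast
  next
    fix a r c assume "(a, r) \<in> \<Union>Ch"
    then obtain G where "G \<in> Ch" "(a, r) \<in> G" by blast
    then show "(c *\<^sub>R a, c * r) \<in> \<Union>Ch" using assms(2) dominated_linear_graphD(3) by blast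
  next
    fix a r assume "(a, r) \<in> \<Union>Ch"
    then obtain G where "G \<in> Ch" "(a, r) \<in> G" by blast
    then show "r \<le> C * norm a" using assms(2) dominated_linear_graphD(4) by blast
  qed
qed

lemma dominated_linear_graph_extension_constant:
  assumes M: "dominated_linear_graph C M" and "M \<noteq> {}" and "C \<ge> 0"
  obtains c where "\<And>w r. (w, r) \<in> M \<Longrightarrow> r - C * norm (w - a) \<le> c"
    and "\<And>w r. (w, r) \<in> M \<Longrightarrow> c \<le> C * norm (w + a) - r"
proof -
  have key: "r - C * norm (w - a) \<le> C * norm (w' + a) - r'"
    if "(w, r) \<in> M" "(w', r') \<in> M" for w r w' r'
  proof -
    have "r + r' \<le> C * norm (w + w')"
      using dominated_linear_graphD(2,4) [OF M] that by blast
    also have "\<dots> \<le> C * (norm (w - a) + norm (w' + a))"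
      using norm_triangle_ineq [of "w - a" "w' + a"] \<open>C \<ge> 0\<close> by (simp add: mult_left_mono)
    finally show ?thesis by (simp add: algebra_simps)
  qed
  define L where "L = {r - C * norm (w - a) | w r. (w, r) \<in> M}"
  obtain w0 r0 where "(w0, r0) \<in> M" using \<open>M \<noteq> {}\<close> by auto
  then have "bdd_above L" "L \<noteq> {}"
    unfolding L_def bdd_above_def using key by blast+
  show thesis
  proof
    show "r - C * norm (w - a) \<le> Sup L" if "(w, r) \<in> M" for w r
      using that \<open>bdd_above L\<close> unfolding L_def by (blast intro: cSup_upper)
    show "Sup L \<le> C * norm (w + a) - r" if "(w, r) \<in> M" for w r
      using that \<open>L \<noteq> {}\<close> key unfolding L_def by (blast intro: cSup_least)
  qed
qed

lemma dominated_linear_graph_line_bound: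
  assumes M: "dominated_linear_graph C M" and vs: "(v, s) \<in> M"
    and lower: "\<And>w r. (w, r) \<in> M \<Longrightarrow> r - C * norm (w - a) \<le> c"
    and upper: "\<And>w r. (w, r) \<in> M \<Longrightarrow> c \<le> C * norm (w + a) - r"
  shows "s + t * c \<le> C * norm (v + t *\<^sub>R a)"
proof -
  consider "t = 0" | "t > 0" | "t < 0" by linarith
  then show ?thesis
  proof cases
    case 1 then show ?thesis using dominated_linear_graphD(4) [OF M vs] by simp
  next
    case 2
    have "c \<le> C * norm ((1/t) *\<^sub>R v + a) - (1/t) * s"
      using upper dominated_linear_graphD(3) [OF M vs] by blast
    then have "t * c \<le> t * (C * norm ((1/t) *\<^sub>R v + a) - (1/t) * s)"
      using 2 by (simp add: mult_left_mono)
    also have "\<dots> = C * (t * norm ((1/t) *\<^sub>R v + a)) - s"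
      using 2 by (simp add: algebra_simps)
    also have "t * norm ((1/t) *\<^sub>R v + a) = norm (t *\<^sub>R ((1/t) *\<^sub>R v + a))"
      using 2 by simp
    also have "t *\<^sub>R ((1/t) *\<^sub>R v + a) = v + t *\<^sub>R a"
      using 2 by (simp add: scaleR_add_right)
    finally show ?thesis by simp
  next
    case 3
    define u where "u = - t"
    have u: "u > 0" using 3 by (simp add: u_def)
    have "(1/u) * s - C * norm ((1/u) *\<^sub>R v - a) \<le> c"
      using lower dominated_linear_graphD(3) [OF M vs] by blast
    then have "u * ((1/u) * s - C * norm ((1/u) *\<^sub>R v - a)) \<le> u * c"
      using u by (simp add: mult_left_mono)
    then have "s - C * (u * norm ((1/u) *\<^sub>R v - a)) \<le> u * c"
      using u by (simp add: algebra_simps)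
    also have "u * norm ((1/u) *\<^sub>R v - a) = norm (u *\<^sub>R ((1/u) *\<^sub>R v - a))"
      using u by simp
    also have "u *\<^sub>R ((1/u) *\<^sub>R v - a) = v + t *\<^sub>R a"
      using u by (simp add: scaleR_diff_right u_def)
    finally show ?thesis by (simp add: u_def)
  qed
qed

lemma dominated_linear_graph_line_unique:
  assumes M: "dominated_linear_graph C M" and a: "\<And>r. (a, r) \<notin> M"
    and "(v1, s1) \<in> M" "(v2, s2) \<in> M" "v1 + t1 *\<^sub>R a = v2 + t2 *\<^sub>R a"
  shows "t1 = t2 \<and> v1 = v2"
proof (rule ccontr)
  assume "\<not> (t1 = t2 \<and> v1 = v2)"
  with assms(5) have "t1 \<noteq> t2" by auto
  have "((1 / (t1 - t2)) *\<^sub>R (v2 + (-1) *\<^sub>R v1), (1 / (t1 - t2)) * (s2 + (-1) * s1)) \<in> M"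
    using dominated_linear_graphD(2,3) [OF M] assms(3,4) by blast
  moreover have "v2 - v1 = (t1 - t2) *\<^sub>R a" using assms(5) by (simp add: algebra_simps)
  then have "(1 / (t1 - t2)) *\<^sub>R (v2 + (-1) *\<^sub>R v1) = a" using \<open>t1 \<noteq> t2\<close> by simp
  ultimately show False using a by simp
qed

lemma dominated_linear_graph_extend:
  assumes M: "dominated_linear_graph C M" and "M \<noteq> {}" and "C \<ge> 0" and a: "\<And>r. (a, r) \<notin> M"
  shows "\<exists>M'. dominated_linear_graph C M' \<and> M \<subset> M'"
proof -
  obtain c where lower: "\<And>w r. (w, r) \<in> M \<Longrightarrow> r - C * norm (w - a) \<le> c"
    and upper: "\<And>w r. (w, r) \<in> M \<Longrightarrow> c \<le> C * norm (w + a) - r"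
    using dominated_linear_graph_extension_constant [OF assms(1-3)] by metis
  define M' where "M' = {(v + t *\<^sub>R a, s + t * c) | v s t. (v, s) \<in> M}"
  have "dominated_linear_graph C M'"
    unfolding dominated_linear_graph_def
  proof (intro conjI allI impI)
    fix x r s assume "(x, r) \<in> M'" "(x, s) \<in> M'"
    then show "r = s"
      unfolding M'_def using dominated_linear_graph_line_unique [OF M a] dominated_linear_graphD(1) [OF M]
      by blast
  next
    fix x y r s assume "(x, r) \<in> M'" "(y, s) \<in> M'"
    then obtain v1 s1 t1 v2 s2 t2 where "(v1, s1) \<in> M" "(v2, s2) \<in> M"
      "x = v1 + t1 *\<^sub>R a" "r = s1 + t1 * c" "y = v2 + t2 *\<^sub>R a" "s = s2 + t2 * c"
      unfolding M'_def by blast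
    moreover from this have "(v1 + v2, s1 + s2) \<in> M" using dominated_linear_graphD(2) [OF M] by blast
    moreover have "x + y = (v1 + v2) + (t1 + t2) *\<^sub>R a" "r + s = (s1 + s2) + (t1 + t2) * c"
      using calculation by (simp_all add: algebra_simps)
    ultimately show "(x + y, r + s) \<in> M'"
      unfolding M'_def by blast
  next
    fix x r k assume "(x, r) \<in> M'"
    then obtain v s t where "(v, s) \<in> M" "x = v + t *\<^sub>R a" "r = s + t * c"
      unfolding M'_def by blast
    moreover from this have "(k *\<^sub>R v, k * s) \<in> M" using dominated_linear_graphD(3) [OF M] by blast
    moreover have "k *\<^sub>R x = k *\<^sub>R v + (k * t) *\<^sub>R a" "k * r = k * s + (k * t) * c"
      using calculation by (simp_all add: algebra_simps)
    ultimately show "(k *\<^sub>R x, k * r) \<in> M'"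
      unfolding M'_def by blast
  next
    fix x r assume "(x, r) \<in> M'"
    then show "r \<le> C * norm x"
      unfolding M'_def using dominated_linear_graph_line_bound [OF M _ lower upper] by blast
  qed
  moreover have "M \<subseteq> M'"
    unfolding M'_def by (force intro: exI [of _ 0])
  moreover have "(0, 0) \<in> M"
    using \<open>M \<noteq> {}\<close> dominated_linear_graphD(3) [OF M, of _ _ 0] by fastforce
  then have "(a, c) \<in> M'"
    unfolding M'_def by (force intro: exI [of _ 1])
  ultimately show ?thesis using a by blast
qed

lemma bounded_linear_of_total_dominated_linear_graph:
  assumes M: "dominated_linear_graph C M" and total: "\<And>x. \<exists>r. (x, r) \<in> M"
  shows "\<exists>u. bounded_linear u \<and> (\<forall>x r. (x, r) \<in> M \<longrightarrow> u x = r)"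
proof -
  have "\<forall>x. \<exists>r. (x, r) \<in> M" using total by blast
  then obtain u where "\<forall>x. (x, u x) \<in> M" by (rule choice [THEN exE])
  then have uM: "\<And>x. (x, u x) \<in> M" by blast
  have u_eq: "u x = r" if "(x, r) \<in> M" for x r
    using dominated_linear_graphD(1) [OF M uM that] .
  have "bounded_linear u"
  proof (rule bounded_linear_intro [where K = C])
    show "u (x + y) = u x + u y" for x y
      using u_eq [OF dominated_linear_graphD(2) [OF M uM uM]] .
    show "u (r *\<^sub>R x) = r *\<^sub>R u x" for r x
      using u_eq [OF dominated_linear_graphD(3) [OF M uM]] by simp
    show "norm (u x) \<le> norm x * C" for x
    proof -
      have "u (- x) = - u x"
        using u_eq [OF dominated_linear_graphD(3) [OF M uM, where c = "-1"]] by simp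
      then show ?thesis
        using dominated_linear_graphD(4) [OF M uM, of x] dominated_linear_graphD(4) [OF M uM, of "- x"]
        by (simp add: abs_le_iff mult.commute)
    qed
  qed
  then show ?thesis using u_eq by blast
qed

lemma hahn_banach_dominated_linear_graph:
  assumes G0: "dominated_linear_graph C G0" and "G0 \<noteq> {}" and "C \<ge> 0"
  shows "\<exists>u. bounded_linear u \<and> (\<forall>a r. (a, r) \<in> G0 \<longrightarrow> u a = r)"
proof -
  let ?A = "{G. G0 \<subseteq> G \<and> dominated_linear_graph C G}"
  have "\<forall>Ch\<in>chains ?A. \<exists>U\<in>?A. \<forall>X\<in>Ch. X \<subseteq> U"
  proof
    fix Ch assume Ch: "Ch \<in> chains ?A"
    show "\<exists>U\<in>?A. \<forall>X\<in>Ch. X \<subseteq> U"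
  proof (cases "Ch = {}")
    case False
    have "chain\<^sub>\<subseteq> Ch" "\<forall>G\<in>Ch. G0 \<subseteq> G \<and> dominated_linear_graph C G"
      using Ch unfolding chains_def by auto
    then have "\<Union>Ch \<in> ?A"
      using False dominated_linear_graph_Union_chain [of Ch C] by auto
    then show ?thesis by blast
  qed (use G0 in auto)
  qed
  from Zorn_Lemma2 [OF this]
  obtain M where M: "M \<in> ?A" and max: "\<forall>X\<in>?A. M \<subseteq> X \<longrightarrow> X = M"
    by blast
  have "\<exists>r. (x, r) \<in> M" for x
  proof (rule ccontr)
    assume "\<nexists>r. (x, r) \<in> M"
    moreover have "M \<noteq> {}" using M \<open>G0 \<noteq> {}\<close> by auto
    ultimately obtain M' where "dominated_linear_graph C M'" "M \<subset> M'"
      using dominated_linear_graph_extend [of C M x] M \<open>C \<ge> 0\<close> by auto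
    moreover from this have "M' \<in> ?A" using M by auto
    ultimately show False using max by auto
  qed
  then obtain u where "bounded_linear u" "\<forall>x r. (x, r) \<in> M \<longrightarrow> u x = r"
    using bounded_linear_of_total_dominated_linear_graph [of C M] M by auto
  then show ?thesis using M by auto
qed

lemma dominated_linear_graph_coordinate:
  fixes x :: "'a::real_normed_vector"
  assumes x: "x \<notin> span S" and d: "infdist x (span S) > 0"
  shows "dominated_linear_graph (1 / infdist x (span S)) {(m + t *\<^sub>R x, t) | m t. m \<in> span S}"
    (is "dominated_linear_graph _ ?G")
proof -
  let ?d = "infdist x (span S)"
  have G_iff: "(y, r) \<in> ?G \<longleftrightarrow> (\<exists>m\<in>span S. y = m + r *\<^sub>R x)" for y r
    by blast
  show ?thesis
    unfolding dominated_linear_graph_def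
  proof (intro conjI allI impI)
    fix y r s assume "(y, r) \<in> ?G" "(y, s) \<in> ?G"
    then obtain m m' where m: "m \<in> span S" "m' \<in> span S" "m + r *\<^sub>R x = m' + s *\<^sub>R x"
      unfolding G_iff by auto
    show "r = s"
    proof (rule ccontr)
      assume "r \<noteq> s"
      have "(r - s) *\<^sub>R x = m' - m" using m(3) by (simp add: algebra_simps)
      then have "x = (1 / (r - s)) *\<^sub>R (m' - m)"
        using \<open>r \<noteq> s\<close> by (metis scaleR_one scaleR_scaleR nonzero_divide_eq_eq right_minus_eq)
      then show False using x m by (simp add: span_diff span_scale)
    qed
  next
    fix y z r s assume "(y, r) \<in> ?G" "(z, s) \<in> ?G"
    then obtain m m' where "m \<in> span S" "m' \<in> span S" "y = m + r *\<^sub>R x" "z = m' + s *\<^sub>R x"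
      unfolding G_iff by auto
    moreover from this have "y + z = (m + m') + (r + s) *\<^sub>R x" by (simp add: algebra_simps)
    ultimately show "(y + z, r + s) \<in> ?G" unfolding G_iff by (blast intro: span_add)
  next
    fix y r c assume "(y, r) \<in> ?G"
    then obtain m where "m \<in> span S" "y = m + r *\<^sub>R x"
      unfolding G_iff by auto
    moreover from this have "c *\<^sub>R y = c *\<^sub>R m + (c * r) *\<^sub>R x" by (simp add: algebra_simps)
    ultimately show "(c *\<^sub>R y, c * r) \<in> ?G" unfolding G_iff by (blast intro: span_scale)
  next
    fix y r assume "(y, r) \<in> ?G"
    then obtain m where "m \<in> span S" "y = m + r *\<^sub>R x"
      unfolding G_iff by auto
    then have "\<bar>r\<bar> * ?d \<le> norm y" using abs_scale_infdist_le_norm by blast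
    then have "\<bar>r\<bar> \<le> norm y / ?d" using d by (simp add: le_divide_eq)
    then show "r \<le> 1 / ?d * norm y" by simp
  qed
qed

lemma bounded_functional_separating_finite_span:
  fixes x :: "'a::real_normed_vector"
  assumes S: "finite S" and x: "x \<notin> span S"
  shows "\<exists>u::'a \<Rightarrow> real. bounded_linear u \<and> (\<forall>m\<in>span S. u m = 0) \<and> u x = 1"
proof -
  let ?d = "infdist x (span S)"
  define G0 where "G0 = {(m + t *\<^sub>R x, t) | m t. m \<in> span S}"
  have d: "?d > 0"
    using infdist_pos_not_in_closed [OF closed_span_finite [OF S] _ x] span_zero by blast
  have "(x, 1) \<in> G0" "\<forall>m\<in>span S. (m, 0) \<in> G0"
    unfolding G0_def using span_zero by force+
  moreover from this have "G0 \<noteq> {}" by blast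
  ultimately obtain u where "bounded_linear u" "\<forall>a r. (a, r) \<in> G0 \<longrightarrow> u a = r"
    using hahn_banach_dominated_linear_graph [of "1 / ?d" G0] dominated_linear_graph_coordinate [OF x d] d
    unfolding G0_def by auto
  then show ?thesis using \<open>(x, 1) \<in> G0\<close> \<open>\<forall>m\<in>span S. (m, 0) \<in> G0\<close> by blast
qed

definition bounded_clinear_functional :: "('a::complex_banach \<Rightarrow> complex) \<Rightarrow> bool" where
  "bounded_clinear_functional g \<longleftrightarrow> bounded_linear g \<and> (\<forall>c v. g (c *\<^sub>C v) = c * g v)"

lemma bounded_clinear_functional_complexify:
  fixes u :: "'a::complex_banach \<Rightarrow> real"
  assumes u: "bounded_linear u"
  shows "bounded_clinear_functional (\<lambda>v. complex_of_real (u v) - \<i> * complex_of_real (u (\<i> *\<^sub>C v)))"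
    (is "bounded_clinear_functional ?g")
proof -
  have "bounded_linear (\<lambda>v. complex_of_real (u (\<i> *\<^sub>C v)))"
    using bounded_linear_compose [OF bounded_linear_of_real
        bounded_linear_compose [OF u bounded_linear_scaleC]] .
  then have bl: "bounded_linear ?g"
    using bounded_linear_sub [OF bounded_linear_compose [OF bounded_linear_of_real u]
        bounded_linear_compose [OF bounded_linear_mult_right]] by blast
  have i: "?g (\<i> *\<^sub>C v) = \<i> * ?g v" for v
  proof -
    have "u (\<i> *\<^sub>C (\<i> *\<^sub>C v)) = - u v"
      using linear_neg [OF bounded_linear.linear [OF u]]
      by (simp add: scaleC_scaleC scaleC_minus_left scaleC_one)
    then show ?thesis by (simp add: algebra_simps)
  qed
  have "?g (c *\<^sub>C v) = c * ?g v" for c v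
  proof -
    have "?g (c *\<^sub>C v) = complex_of_real (Re c) * ?g v + complex_of_real (Im c) * ?g (\<i> *\<^sub>C v)"
      unfolding scaleC_Re_Im [of c v] using linear_add [OF bounded_linear.linear [OF bl]]
        linear_scale [OF bounded_linear.linear [OF bl]] by (simp add: scaleR_conv_of_real)
    also have "\<dots> = (complex_of_real (Re c) + complex_of_real (Im c) * \<i>) * ?g v"
      by (simp add: i algebra_simps)
    also have "complex_of_real (Re c) + complex_of_real (Im c) * \<i> = c"
      by (simp add: complex_eq_iff)
    finally show ?thesis .
  qed
  then show ?thesis using bl unfolding bounded_clinear_functional_def by blast
qed

lemma bounded_clinear_functional_separating:
  fixes x :: "'a::complex_banach"
  assumes T: "finite T" and x: "x \<notin> cspan T"
  shows "\<exists>g. bounded_clinear_functional g \<and> (\<forall>m\<in>cspan T. g m = 0) \<and> g x = 1"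
proof -
  let ?S = "insert (\<i> *\<^sub>C x) (T \<union> (\<lambda>x. \<i> *\<^sub>C x) ` T)"
  have "x \<notin> span ?S"
  proof
    assume "x \<in> span ?S"
    then obtain r where "x - r *\<^sub>R (\<i> *\<^sub>C x) \<in> cspan T"
      unfolding span_breakdown_eq cspan_def by blast
    then have "(1 - complex_of_real r * \<i>) *\<^sub>C x \<in> cspan T"
      by (simp add: scaleC_diff_left scaleC_one scaleR_scaleC scaleC_scaleC)
    then have "1 - complex_of_real r * \<i> = 0" using cspan_scaleC_cancel x by blast
    then show False by (simp add: complex_eq_iff)
  qed
  moreover have "finite ?S" using T by simp
  ultimately obtain u :: "'a \<Rightarrow> real" where u: "bounded_linear u" "\<forall>m\<in>span ?S. u m = 0" "u x = 1"
    using bounded_functional_separating_finite_span by blast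
  have "cspan T \<subseteq> span ?S" unfolding cspan_def by (rule span_mono) blast
  then have "u m = 0" "u (\<i> *\<^sub>C m) = 0" if "m \<in> cspan T" for m
    using u(2) that cspan_i_scaleC by blast+
  moreover have "u (\<i> *\<^sub>C x) = 0" using u(2) span_base [of "\<i> *\<^sub>C x" ?S] by blast
  ultimately have "(\<forall>m\<in>cspan T. complex_of_real (u m) - \<i> * complex_of_real (u (\<i> *\<^sub>C m)) = 0)
      \<and> complex_of_real (u x) - \<i> * complex_of_real (u (\<i> *\<^sub>C x)) = 1"
    using u(3) by simp
  then show ?thesis
    using bounded_clinear_functional_complexify [OF u(1)] by blast
qed

lemma BX_I: "bounded_linear T \<Longrightarrow> (\<And>c x. T (c *\<^sub>C x) = c *\<^sub>C T x) \<Longrightarrow> T \<in> BX"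
  unfolding BX_def by blast

lemma BX_bounded_linear: "T \<in> BX \<Longrightarrow> bounded_linear T"
  unfolding BX_def by blast

lemma BX_scaleC: "T \<in> BX \<Longrightarrow> T (c *\<^sub>C x) = c *\<^sub>C T x"
  unfolding BX_def by blast

lemma BX_linear: "T \<in> BX \<Longrightarrow> linear T"
  using BX_bounded_linear bounded_linear.linear by blast

lemma BX_zero: "T \<in> BX \<Longrightarrow> T 0 = 0"
  using BX_linear linear_0 by blast

lemma BX_add: "T \<in> BX \<Longrightarrow> T (x + y) = T x + T y"
  using BX_linear linear_add by blast

lemma BX_diff: "T \<in> BX \<Longrightarrow> T (x - y) = T x - T y"
  using BX_linear linear_diff by blast

lemma BX_sum_op: "R1 \<in> BX \<Longrightarrow> R2 \<in> BX \<Longrightarrow> (\<lambda>v. R1 v + R2 v) \<in> BX"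
  by (rule BX_I [OF bounded_linear_add [OF BX_bounded_linear BX_bounded_linear]])
    (simp_all add: BX_scaleC scaleC_add_right)

lemma BX_comp_op: "A \<in> BX \<Longrightarrow> R \<in> BX \<Longrightarrow> (\<lambda>x. A (R x)) \<in> BX"
  by (rule BX_I [OF bounded_linear_compose [OF BX_bounded_linear BX_bounded_linear]])
    (simp_all add: BX_scaleC)

lemma BX_jordan_product: "A \<in> BX \<Longrightarrow> R \<in> BX \<Longrightarrow> (\<lambda>x. A (R x) + R (A x)) \<in> BX"
  by (rule BX_sum_op [OF BX_comp_op BX_comp_op])

lemma BX_scaleC_op: "(\<lambda>v. c *\<^sub>C v) \<in> BX"
  by (rule BX_I [OF bounded_linear_scaleC]) (simp add: scaleC_scaleC mult.commute)

lemma BX_rank_one_op: "bounded_clinear_functional g \<Longrightarrow> (\<lambda>v. g v *\<^sub>C z) \<in> BX"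
  unfolding bounded_clinear_functional_def
  by (rule BX_I [OF bounded_linear_compose [OF bounded_linear_scaleC_left]]) (simp_all add: scaleC_scaleC)

section \<open>Analytic cores of Jordan products\<close>

definition jordan_cores :: "('a::complex_banach \<Rightarrow> 'a) \<Rightarrow> 'a set set" where
  "jordan_cores A = {analytic_core (\<lambda>x. A (R x) + R (A x)) | R. R \<in> BX}"

text \<open>Four real dimensions are two complex ones: for \<open>A\<close> of rank one with range \<open>\<complex>y\<close>, the range
  of \<open>AR + RA\<close> lies in \<open>\<complex>y + \<complex>(R y)\<close>.\<close>

definition small_jordan_cores :: "('a::complex_banach \<Rightarrow> 'a) \<Rightarrow> bool" where
  "small_jordan_cores A \<longleftrightarrow>
     (\<exists>K\<in>jordan_cores A. K \<noteq> {0}) \<and> (\<forall>K\<in>jordan_cores A. spanned_by_at_most 4 K)"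

lemma jordan_coresI: "R \<in> BX \<Longrightarrow> analytic_core (\<lambda>x. A (R x) + R (A x)) \<in> jordan_cores A"
  unfolding jordan_cores_def by blast

lemma eigenvector_in_jordan_core:
  assumes A: "A \<in> BX" and v: "A v = \<mu> *\<^sub>C v" and "\<mu> \<noteq> 0"
  shows "v \<in> analytic_core (\<lambda>x. A ((1 / (2 * \<mu>)) *\<^sub>C x) + (1 / (2 * \<mu>)) *\<^sub>C A x)"
proof (rule fixed_point_in_analytic_core)
  have "(1 / (2 * \<mu>)) *\<^sub>C (\<mu> *\<^sub>C v) = (1/2) *\<^sub>C v"
    using \<open>\<mu> \<noteq> 0\<close> by (simp add: scaleC_scaleC)
  then show "A ((1 / (2 * \<mu>)) *\<^sub>C v) + (1 / (2 * \<mu>)) *\<^sub>C A v = v"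
    using BX_scaleC [OF A] v scaleC_half_twice by simp
qed

lemma rank_one_iff_cspan: "rank_one T \<longleftrightarrow> (\<exists>y. y \<noteq> 0 \<and> range T = cspan {y})"
  unfolding rank_one_def cspan_singleton ..

lemma jordan_cores_rank_one_nontrivial:
  assumes A: "A \<in> BX" and "rank_one A"
  shows "\<exists>K\<in>jordan_cores A. K \<noteq> {0}"
proof -
  obtain y where y: "y \<noteq> 0" "range A = cspan {y}" using \<open>rank_one A\<close> rank_one_iff_cspan by blast
  have "A y \<in> cspan {y}" using y(2) by blast
  then obtain \<mu> where \<mu>: "A y = \<mu> *\<^sub>C y" unfolding cspan_singleton by blast
  obtain R where "R \<in> BX" "y \<in> analytic_core (\<lambda>x. A (R x) + R (A x))"
  proof (cases "\<mu> = 0")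
    case False
    then show thesis
      using that [OF BX_scaleC_op] eigenvector_in_jordan_core [OF A \<mu> False] by blast
  next
    case True
    have "y \<in> range A" using y(2) cspan_base [of y "{y}"] by simp
    then obtain x0 where x0: "A x0 = y" by blast
    obtain g where g: "bounded_clinear_functional g" "g y = 1"
      using bounded_clinear_functional_separating [of "{}" y] y(1) by auto
    have "g 0 = 0"
      using g(1) linear_0 bounded_linear.linear unfolding bounded_clinear_functional_def by blast
    then have "A (g y *\<^sub>C x0) + g (A y) *\<^sub>C x0 = y"
      using True \<mu> g(2) x0 by (simp add: scaleC_one)
    then show thesis
      by (rule that [OF BX_rank_one_op [OF g(1)] fixed_point_in_analytic_core])
  qed
  then show ?thesis using jordan_coresI [of R A] y(1) by blast
qed

lemma card_le_4: "card {a, b, c, d} \<le> 4"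
  by (simp add: card_insert_if)

lemma spanned_by_at_most_cspan_two: "spanned_by_at_most 4 (cspan {a, b})"
  unfolding spanned_by_at_most_def cspan_def
  by (intro exI [of _ "{\<i> *\<^sub>C a, \<i> *\<^sub>C b, a, b}"]) (simp add: card_le_4)

lemma jordan_cores_rank_one_small:
  assumes "rank_one A" and K: "K \<in> jordan_cores A"
  shows "spanned_by_at_most 4 K"
proof -
  obtain y where y: "range A = cspan {y}" using assms(1) rank_one_iff_cspan by blast
  obtain R where R: "R \<in> BX" "K = analytic_core (\<lambda>x. A (R x) + R (A x))"
    using K unfolding jordan_cores_def by blast
  have "K \<subseteq> cspan {y, R y}"
  proof
    fix z assume "z \<in> K"
    then obtain x where x: "z = A (R x) + R (A x)" using analytic_core_subset_range R(2) by blast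
    have "A (R x) \<in> cspan {y}" "A x \<in> cspan {y}" unfolding y [symmetric] by simp_all
    then obtain c d where "A (R x) = c *\<^sub>C y" "A x = d *\<^sub>C y" unfolding cspan_singleton by blast
    then have "z = c *\<^sub>C y + d *\<^sub>C R y" using x BX_scaleC [OF R(1)] by simp
    also have "\<dots> \<in> cspan {y, R y}"
      using cspan_base [of y "{y, R y}"] cspan_base [of "R y" "{y, R y}"]
      by (intro cspan_add cspan_scaleC) simp_all
    finally show "z \<in> cspan {y, R y}" .
  qed
  then show ?thesis
    using spanned_by_at_most_cspan_two [of y "R y"] unfolding spanned_by_at_most_def by blast
qed

lemma independent_five:
  assumes "x1 \<noteq> 0" and "x2 \<notin> cspan {x1}" and "y \<notin> cspan {x2, x1}"
  shows "independent {y, \<i> *\<^sub>C x2, x2, \<i> *\<^sub>C x1, x1} \<and> card {y, \<i> *\<^sub>C x2, x2, \<i> *\<^sub>C x1, x1} = 5"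
proof -
  have "x1 \<notin> span {}" "x1 \<notin> cspan {}" using assms(1) by simp_all
  then have 1: "independent {x1} \<and> card {x1} = 1"
    using independent_insert_card [of x1 "{}"] by (simp add: independent_empty)
  have "\<i> *\<^sub>C x1 \<notin> span {x1}"
    using i_scaleC_notin_span_insert [OF \<open>x1 \<notin> cspan {}\<close>] by simp
  with 1 have 2: "independent {\<i> *\<^sub>C x1, x1} \<and> card {\<i> *\<^sub>C x1, x1} = 2"
    using independent_insert_card [of "\<i> *\<^sub>C x1" "{x1}"] by simp
  have "x2 \<notin> span {\<i> *\<^sub>C x1, x1}"
    using assms(2) unfolding cspan_def by (simp add: insert_commute)
  with 2 have 3: "independent {x2, \<i> *\<^sub>C x1, x1} \<and> card {x2, \<i> *\<^sub>C x1, x1} = 3"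
    using independent_insert_card [of x2 "{\<i> *\<^sub>C x1, x1}"] by simp
  have "\<i> *\<^sub>C x2 \<notin> span {x2, \<i> *\<^sub>C x1, x1}"
    using i_scaleC_notin_span_insert [OF assms(2)] by (simp add: insert_commute)
  with 3 have 4: "independent {\<i> *\<^sub>C x2, x2, \<i> *\<^sub>C x1, x1} \<and> card {\<i> *\<^sub>C x2, x2, \<i> *\<^sub>C x1, x1} = 4"
    using independent_insert_card [of "\<i> *\<^sub>C x2" "{x2, \<i> *\<^sub>C x1, x1}"] by simp
  have "y \<notin> span {\<i> *\<^sub>C x2, x2, \<i> *\<^sub>C x1, x1}"
    using assms(3) unfolding cspan_def by (simp add: insert_commute)
  with 4 show ?thesis
    using independent_insert_card [of y "{\<i> *\<^sub>C x2, x2, \<i> *\<^sub>C x1, x1}"] by simp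
qed

text \<open>The operator \<open>C v = v - g v \<cdot> w\<close> is a bounded right inverse of \<open>B\<close> on this span.\<close>

lemma span_jordan_block_subset_analytic_core:
  assumes B: "B \<in> BX" and g: "bounded_clinear_functional g"
    and x1: "B x1 = x1" "g x1 = 0" and x2: "B x2 = x2" "g x2 = 0"
    and y: "B y = y + w" "g y = 1" and w: "w = a *\<^sub>C x1 + b *\<^sub>C x2"
  shows "span {y, \<i> *\<^sub>C x2, x2, \<i> *\<^sub>C x1, x1} \<subseteq> analytic_core B"
    (is "span ?G \<subseteq> _")
proof -
  define C where "C v = v - g v *\<^sub>C w" for v
  have g_scaleC: "g (c *\<^sub>C v) = c * g v" for c v
    using g unfolding bounded_clinear_functional_def by blast
  have C: "bounded_linear C"
    unfolding C_def [abs_def] using g unfolding bounded_clinear_functional_def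
    by (intro bounded_linear_sub bounded_linear_ident bounded_linear_compose [OF bounded_linear_scaleC_left]) blast
  have "w \<in> span ?G"
    unfolding w scaleC_Re_Im [of a] scaleC_Re_Im [of b]
    by (intro span_add span_scale span_base) simp_all
  have Bw: "B w = w"
    unfolding w using x1 x2 by (simp add: BX_add [OF B] BX_scaleC [OF B])
  have C_G: "C z \<in> span ?G \<and> B (C z) = z" if "z \<in> ?G" for z
  proof (cases "z = y")
    case True
    have "y - w \<in> span ?G" by (rule span_diff [OF span_base \<open>w \<in> span ?G\<close>]) simp
    moreover have "C y = y - w" by (simp add: C_def y(2) scaleC_one)
    ultimately show ?thesis using True by (simp add: BX_diff [OF B] y(1) Bw)
  next
    case False
    then have z: "z \<in> {\<i> *\<^sub>C x2, x2, \<i> *\<^sub>C x1, x1}" using that by simp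
    then have "C z = z" using x1(2) x2(2) by (auto simp: C_def g_scaleC)
    moreover have "B z = z" using z x1(1) x2(1) by (auto simp: BX_scaleC [OF B])
    ultimately show ?thesis using that by (simp add: span_base)
  qed
  have "C v \<in> span ?G" if "v \<in> span ?G" for v
  proof -
    have "C ` span ?G = span (C ` ?G)"
      using span_linear_image [OF bounded_linear.linear [OF C]] by (rule sym)
    also have "\<dots> \<subseteq> span ?G" using C_G by (intro span_minimal subspace_span) blast
    finally show ?thesis using that by blast
  qed
  moreover have "B (C v) = v" if "v \<in> span ?G" for v
  proof (rule linear_eq_on_span [where f = "\<lambda>v. B (C v)" and g = "\<lambda>v. v", OF _ _ _ that])
    show "linear (\<lambda>v. B (C v))"
      using linear_compose [OF bounded_linear.linear [OF C] BX_linear [OF B]] by (simp add: o_def)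
    show "linear (\<lambda>v. v)" by (simp add: linear_id [unfolded id_def])
    show "B (C z) = z" if "z \<in> ?G" for z using C_G [OF that] by blast
  qed
  ultimately show ?thesis
    by (rule subset_analytic_core_if_bounded_right_inverse [OF C])
qed

lemma not_spanned_by_at_most_if_independent:
  assumes "independent V" "V \<subseteq> K" "card V = Suc n"
  shows "\<not> spanned_by_at_most n K"
proof
  assume "spanned_by_at_most n K"
  then have "card V \<le> n" using spanned_by_at_most_independent_card assms(1,2) by blast
  with assms(3) show False by simp
qed

definition good_pair :: "('a::complex_banach \<Rightarrow> 'a) \<Rightarrow> 'a \<Rightarrow> 'a \<Rightarrow> bool" where
  "good_pair A x1 x2 \<longleftrightarrow>
     x1 \<noteq> 0 \<and> x2 \<notin> cspan {x1} \<and> A x1 \<notin> cspan {x2, x1} \<and> A x2 \<notin> cspan {A x1, x2, x1}"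

text \<open>With \<open>R\<close> sending \<open>A x\<^sub>i\<close> to \<open>x\<^sub>i\<close> and killing \<open>x\<^sub>1, x\<^sub>2\<close>, the Jordan product \<open>AR + RA\<close> fixes
  \<open>x\<^sub>1, x\<^sub>2\<close> and maps \<open>A x\<^sub>1\<close> to \<open>A x\<^sub>1\<close> plus a combination of \<open>x\<^sub>1, x\<^sub>2\<close>.\<close>

lemma good_pair_large_jordan_core:
  assumes A: "A \<in> BX" and "good_pair A x1 x2"
  shows "\<exists>K\<in>jordan_cores A. \<not> spanned_by_at_most 4 K"
proof -
  define y1 where "y1 = A x1"
  define y2 where "y2 = A x2"
  have h: "x1 \<noteq> 0" "x2 \<notin> cspan {x1}" "y1 \<notin> cspan {x2, x1}" "y2 \<notin> cspan {y1, x2, x1}"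
    using \<open>good_pair A x1 x2\<close> unfolding good_pair_def y1_def y2_def by blast+
  have "y1 \<notin> cspan {y2, x2, x1}"
    using cspan_exchange [OF h(3)] h(4) by simp
  then obtain g1 where g1: "bounded_clinear_functional g1" "\<forall>m\<in>cspan {y2, x2, x1}. g1 m = 0" "g1 y1 = 1"
    using bounded_clinear_functional_separating [of "{y2, x2, x1}"] by auto
  obtain g2 where g2: "bounded_clinear_functional g2" "\<forall>m\<in>cspan {y1, x2, x1}. g2 m = 0" "g2 y2 = 1"
    using bounded_clinear_functional_separating [of "{y1, x2, x1}"] h(4) by auto
  have g_vanish: "g1 x1 = 0" "g1 x2 = 0" "g1 y2 = 0" "g2 x1 = 0" "g2 x2 = 0" "g2 y1 = 0"
    using g1(2) g2(2) by (simp_all add: cspan_base)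
  define R where "R v = g1 v *\<^sub>C x1 + g2 v *\<^sub>C x2" for v
  have R: "R \<in> BX"
    unfolding R_def [abs_def] by (rule BX_sum_op [OF BX_rank_one_op [OF g1(1)] BX_rank_one_op [OF g2(1)]])
  define B where "B x = A (R x) + R (A x)" for x
  have B: "B \<in> BX" unfolding B_def [abs_def] by (rule BX_jordan_product [OF A R])
  have R_values: "R x1 = 0" "R x2 = 0" "R y1 = x1" "R y2 = x2"
    by (simp_all add: R_def g_vanish g1(3) g2(3) scaleC_one)
  have B_values: "B x1 = x1" "B x2 = x2" "B y1 = y1 + R (A y1)"
    by (simp_all add: B_def R_values BX_zero [OF A] flip: y1_def y2_def)
  have "R (A y1) = g1 (A y1) *\<^sub>C x1 + g2 (A y1) *\<^sub>C x2" by (simp add: R_def)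
  from span_jordan_block_subset_analytic_core [OF B g1(1) B_values(1) g_vanish(1) B_values(2) g_vanish(2)
      B_values(3) g1(3) this]
  have "span {y1, \<i> *\<^sub>C x2, x2, \<i> *\<^sub>C x1, x1} \<subseteq> analytic_core B" .
  then have "{y1, \<i> *\<^sub>C x2, x2, \<i> *\<^sub>C x1, x1} \<subseteq> analytic_core B"
    by (rule order_trans [OF span_superset])
  moreover have "card {y1, \<i> *\<^sub>C x2, x2, \<i> *\<^sub>C x1, x1} = Suc 4"
    using independent_five [OF h(1-3)] by simp
  ultimately have "\<not> spanned_by_at_most 4 (analytic_core B)"
    using independent_five [OF h(1-3)] not_spanned_by_at_most_if_independent by meson
  moreover have "analytic_core B \<in> jordan_cores A"
    unfolding B_def by (rule jordan_coresI [OF R])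
  ultimately show ?thesis by blast
qed

lemma scalar_plus_finite_rank_large_jordan_core:
  fixes A :: "'a::complex_banach \<Rightarrow> 'a"
  assumes A: "A \<in> BX" and inf: "\<not> complex_finite_dim TYPE('a)"
    and F: "finite F" and finite_rank: "\<And>x. A x - \<mu> *\<^sub>C x \<in> cspan F" and "\<mu> \<noteq> 0"
  shows "\<exists>K\<in>jordan_cores A. \<not> spanned_by_at_most 4 K"
proof -
  have lin: "linear (\<lambda>x. A x - \<mu> *\<^sub>C x)"
    using bounded_linear_sub [OF BX_bounded_linear [OF A] bounded_linear_scaleC] bounded_linear.linear by blast
  have fin: "finite (F \<union> (\<lambda>x. \<i> *\<^sub>C x) ` F)" using F by simp
  have "A x - \<mu> *\<^sub>C x \<in> span (F \<union> (\<lambda>x. \<i> *\<^sub>C x) ` F)" for x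
    using finite_rank [of x] unfolding cspan_def .
  from finite_rank_kernel_independent [OF lin fin this not_complex_finite_dim_imp_notin_span [OF inf]]
  obtain V where V: "independent V" "card V = Suc 4" "\<forall>v\<in>V. A v - \<mu> *\<^sub>C v = 0"
    by blast
  define R where "R = (\<lambda>v::'a. (1 / (2 * \<mu>)) *\<^sub>C v)"
  have "V \<subseteq> analytic_core (\<lambda>x. A (R x) + R (A x))"
    using eigenvector_in_jordan_core [OF A _ \<open>\<mu> \<noteq> 0\<close>] V(3) unfolding R_def by (simp add: subset_eq)
  then have "\<not> spanned_by_at_most 4 (analytic_core (\<lambda>x. A (R x) + R (A x)))"
    using not_spanned_by_at_most_if_independent V(1,2) by blast
  moreover have "R \<in> BX" unfolding R_def by (rule BX_scaleC_op)
  ultimately show ?thesis using jordan_coresI by blast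
qed

lemma finite_rank_kernel_notin_cspan:
  fixes A :: "'a::complex_banach \<Rightarrow> 'a"
  assumes A: "A \<in> BX" and inf: "\<not> complex_finite_dim TYPE('a)"
    and F: "finite F" and finite_rank: "\<And>x. A x \<in> cspan F" and T: "finite T"
  shows "\<exists>k. A k = 0 \<and> k \<notin> cspan T"
proof -
  have "finite (F \<union> (\<lambda>x. \<i> *\<^sub>C x) ` F)" "finite (T \<union> (\<lambda>x. \<i> *\<^sub>C x) ` T)"
    using F T by simp_all
  moreover have "A x \<in> span (F \<union> (\<lambda>x. \<i> *\<^sub>C x) ` F)" for x
    using finite_rank [of x] unfolding cspan_def .
  ultimately show ?thesis
    using finite_rank_kernel_notin_span [OF BX_linear [OF A]] not_complex_finite_dim_imp_notin_span [OF inf]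
    unfolding cspan_def by blast
qed

text \<open>Perturbing \<open>x\<^sub>1, x\<^sub>2\<close> by kernel vectors \<open>k\<^sub>1, k\<^sub>2\<close> in general position leaves \<open>A x\<^sub>1, A x\<^sub>2\<close>
  unchanged while making \<open>x\<^sub>1 + k\<^sub>1, x\<^sub>2 + k\<^sub>2\<close> independent from everything in sight.\<close>

lemma fresh_shift_coefficients_vanish:
  assumes k1: "k1 \<notin> cspan T" and k2: "k2 \<notin> cspan (insert k1 T)"
    and T: "x1 \<in> cspan T" "x2 \<in> cspan T" "z \<in> cspan T"
    and eq: "z - b *\<^sub>C (x2 + k2) - a *\<^sub>C (x1 + k1) = 0"
  shows "b = 0 \<and> a = 0"
proof -
  have sub: "cspan T \<subseteq> cspan (insert k1 T)" by (rule cspan_mono) blast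
  have "(- b) *\<^sub>C k2 + (z - b *\<^sub>C x2 - a *\<^sub>C x1 - a *\<^sub>C k1) = 0"
    using eq by (simp add: scaleC_add_right scaleC_minus_left algebra_simps)
  moreover have "z - b *\<^sub>C x2 - a *\<^sub>C x1 - a *\<^sub>C k1 \<in> cspan (insert k1 T)"
    using T sub cspan_base [of k1 "insert k1 T"] by (intro cspan_diff cspan_scaleC) auto
  ultimately have "- b = 0"
    using cspan_lincomb_cancel [OF k2] cspan_zero by metis
  then have b: "b = 0" by simp
  then have "(- a) *\<^sub>C k1 + (z - a *\<^sub>C x1) = 0"
    using eq by (simp add: scaleC_add_right scaleC_minus_left algebra_simps)
  moreover have "z - a *\<^sub>C x1 \<in> cspan T" using T by (intro cspan_diff cspan_scaleC)
  ultimately have "- a = 0"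
    using cspan_lincomb_cancel [OF k1] cspan_zero by metis
  then show ?thesis using b by simp
qed

lemma good_pair_fresh_shift:
  assumes A: "A \<in> BX" and y1: "A x1 \<noteq> 0" and y2: "A x2 \<notin> cspan {A x1}"
    and k1: "A k1 = 0" "k1 \<notin> cspan {A x2, A x1, x2, x1}"
    and k2: "A k2 = 0" "k2 \<notin> cspan (insert k1 {A x2, A x1, x2, x1})"
  shows "good_pair A (x1 + k1) (x2 + k2)"
proof -
  define T where "T = {A x2, A x1, x2, x1}"
  define u1 where "u1 = x1 + k1"
  define u2 where "u2 = x2 + k2"
  have in_T: "A x2 \<in> cspan T" "A x1 \<in> cspan T" "x2 \<in> cspan T" "x1 \<in> cspan T"
    by (simp_all add: T_def cspan_base)
  note vanish = fresh_shift_coefficients_vanish [OF k1(2) [folded T_def] k2(2) [folded T_def] in_T(4,3)]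
  have Au: "A u1 = A x1" "A u2 = A x2" by (simp_all add: u1_def u2_def BX_add [OF A] k1(1) k2(1))
  have "u1 \<noteq> 0"
  proof
    assume "u1 = 0"
    then have "0 - 0 *\<^sub>C (x2 + k2) - 1 *\<^sub>C (x1 + k1) = 0" by (simp add: u1_def scaleC_one)
    from vanish [OF cspan_zero this] show False by simp
  qed
  moreover have "u2 \<notin> cspan {u1}"
  proof
    assume "u2 \<in> cspan {u1}"
    then obtain c where "u2 = c *\<^sub>C u1" unfolding cspan_singleton by blast
    then have "0 - (-1) *\<^sub>C (x2 + k2) - c *\<^sub>C (x1 + k1) = 0"
      by (simp add: u1_def u2_def scaleC_minus_left scaleC_one)
    from vanish [OF cspan_zero this] show False by simp
  qed
  moreover have "A u1 \<notin> cspan {u2, u1}"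
  proof
    assume "A u1 \<in> cspan {u2, u1}"
    then obtain b a where "A x1 - b *\<^sub>C u2 - a *\<^sub>C u1 = 0"
      unfolding Au cspan_breakdown_eq by auto
    then have eq: "A x1 - b *\<^sub>C (x2 + k2) - a *\<^sub>C (x1 + k1) = 0" by (simp only: u1_def u2_def)
    with vanish [OF in_T(2) eq] show False using y1 by simp
  qed
  moreover have "A u2 \<notin> cspan {A u1, u2, u1}"
  proof
    assume "A u2 \<in> cspan {A u1, u2, u1}"
    then obtain c b a where "(A x2 - c *\<^sub>C A x1) - b *\<^sub>C u2 - a *\<^sub>C u1 = 0"
      unfolding Au cspan_breakdown_eq by (auto simp: diff_diff_eq)
    then have eq: "(A x2 - c *\<^sub>C A x1) - b *\<^sub>C (x2 + k2) - a *\<^sub>C (x1 + k1) = 0"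
      by (simp only: u1_def u2_def)
    have "A x2 - c *\<^sub>C A x1 \<in> cspan T"
      using in_T by (intro cspan_diff cspan_scaleC)
    from vanish [OF this eq] have "b = 0 \<and> a = 0" .
    then have "A x2 = c *\<^sub>C A x1" using eq by simp
    then show False using y2 unfolding cspan_singleton by blast
  qed
  ultimately show ?thesis unfolding good_pair_def u1_def u2_def by blast
qed

lemma finite_rank_good_pair:
  fixes A :: "'a::complex_banach \<Rightarrow> 'a"
  assumes A: "A \<in> BX" and inf: "\<not> complex_finite_dim TYPE('a)"
    and F: "finite F" and finite_rank: "\<And>x. A x \<in> cspan F"
    and y1: "A x1 \<noteq> 0" and y2: "A x2 \<notin> cspan {A x1}"
  shows "\<exists>u v. good_pair A u v"
proof -
  obtain k1 where k1: "A k1 = 0" "k1 \<notin> cspan {A x2, A x1, x2, x1}"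
    using finite_rank_kernel_notin_cspan [OF A inf F finite_rank, of "{A x2, A x1, x2, x1}"] by auto
  obtain k2 where k2: "A k2 = 0" "k2 \<notin> cspan (insert k1 {A x2, A x1, x2, x1})"
    using finite_rank_kernel_notin_cspan [OF A inf F finite_rank, of "insert k1 {A x2, A x1, x2, x1}"]
    by auto
  show ?thesis using good_pair_fresh_shift [OF A y1 y2 k1 k2] by blast
qed

lemma no_good_pair_locally_scalar:
  assumes A: "A \<in> BX" and no_good: "\<And>u v. \<not> good_pair A u v"
  shows "\<exists>F. finite F \<and> (\<forall>x. x \<notin> cspan F \<longrightarrow> (\<exists>c. A x - c *\<^sub>C x \<in> cspan F))"
proof (cases "\<exists>u. A u \<notin> cspan {u}")
  case True
  then obtain u where u: "A u \<notin> cspan {u}" by blast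
  have "u \<noteq> 0"
  proof
    assume "u = 0"
    then have "A u \<in> cspan {u}" using BX_zero [OF A] cspan_zero by simp
    with u show False by contradiction
  qed
  have "\<exists>c. A x - c *\<^sub>C x \<in> cspan {A u, u}" if x: "x \<notin> cspan {A u, u}" for x
  proof -
    have "x \<notin> cspan {u}" using x cspan_mono [of "{u}" "{A u, u}"] by blast
    moreover have "A u \<notin> cspan {x, u}" using cspan_exchange [OF u] x by simp
    ultimately have "A x \<in> cspan {A u, x, u}"
      using no_good [of u x] \<open>u \<noteq> 0\<close> unfolding good_pair_def by blast
    then have "A x \<in> cspan (insert x {A u, u})" by (simp add: insert_commute)
    then show ?thesis unfolding cspan_breakdown_eq .
  qed
  then show ?thesis by (intro exI [of _ "{A u, u}"]) simp
next
  case False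
  then have "A x \<in> cspan (insert x {})" for x by simp
  then have "\<exists>c. A x - c *\<^sub>C x \<in> cspan {}" for x
    unfolding cspan_breakdown_eq .
  then show ?thesis by (intro exI [of _ "{}"]) simp
qed

lemma locally_scalar_same_scalar:
  assumes A: "A \<in> BX" and x: "x \<notin> cspan F" and x': "x' \<notin> cspan (insert x F)"
    and c: "A x - c *\<^sub>C x \<in> cspan F" and c': "A x' - c' *\<^sub>C x' \<in> cspan F"
    and c'': "A (x + x') - c'' *\<^sub>C (x + x') \<in> cspan F"
  shows "c = c'"
proof -
  have sub: "cspan F \<subseteq> cspan (insert x F)" by (rule cspan_mono) blast
  have "(A x - c *\<^sub>C x) + (A x' - c' *\<^sub>C x') - (A (x + x') - c'' *\<^sub>C (x + x')) \<in> cspan F"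
    by (rule cspan_diff [OF cspan_add [OF c c'] c''])
  moreover have "(A x - c *\<^sub>C x) + (A x' - c' *\<^sub>C x') - (A (x + x') - c'' *\<^sub>C (x + x'))
      = (c'' - c') *\<^sub>C x' + (c'' - c) *\<^sub>C x"
    by (simp add: BX_add [OF A] scaleC_add_right scaleC_diff_left algebra_simps)
  ultimately have m: "(c'' - c') *\<^sub>C x' + (c'' - c) *\<^sub>C x \<in> cspan F" by simp
  have "(c'' - c) *\<^sub>C x \<in> cspan (insert x F)" by (intro cspan_scaleC cspan_base) simp
  then have "c'' - c' = 0" using cspan_lincomb_cancel [OF x'] m sub by blast
  then have "(c'' - c) *\<^sub>C x \<in> cspan F" using m by simp
  then have "c'' - c = 0" using cspan_scaleC_cancel [OF x] by blast
  then show ?thesis using \<open>c'' - c' = 0\<close> by simp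
qed

lemma locally_scalar_imp_scalar_plus_finite_rank:
  fixes A :: "'a::complex_banach \<Rightarrow> 'a"
  assumes A: "A \<in> BX" and inf: "\<not> complex_finite_dim TYPE('a)" and F: "finite F"
    and local: "\<And>x. x \<notin> cspan F \<Longrightarrow> \<exists>c. A x - c *\<^sub>C x \<in> cspan F"
  shows "\<exists>\<mu>. \<forall>x. A x - \<mu> *\<^sub>C x \<in> cspan F"
proof -
  have "\<forall>x. \<exists>c. x \<notin> cspan F \<longrightarrow> A x - c *\<^sub>C x \<in> cspan F" using local by blast
  then obtain lam where "\<forall>x. x \<notin> cspan F \<longrightarrow> A x - lam x *\<^sub>C x \<in> cspan F"
    by (rule choice [THEN exE])
  then have lam: "\<And>x. x \<notin> cspan F \<Longrightarrow> A x - lam x *\<^sub>C x \<in> cspan F" by blast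
  have same: "lam x = lam x'" if x: "x \<notin> cspan F" and x': "x' \<notin> cspan (insert x F)" for x x'
  proof -
    have "cspan F \<subseteq> cspan (insert x F)" by (rule cspan_mono) blast
    moreover have "x + x' \<notin> cspan (insert x F)"
      using cspan_add_notin [OF cspan_base x'] by simp
    ultimately have "x' \<notin> cspan F" "x + x' \<notin> cspan F" using x' by blast+
    then show ?thesis
      using locally_scalar_same_scalar [OF A x x' lam [OF x] lam lam] by blast
  qed
  have const: "lam x = lam x'" if x: "x \<notin> cspan F" and x': "x' \<notin> cspan F" for x x'
  proof -
    have "finite (insert x (insert x' F))" using F by simp
    then obtain z where z: "z \<notin> cspan (insert x (insert x' F))"
      using not_complex_finite_dim_imp_notin_cspan [OF inf] by blast
    have "z \<notin> cspan (insert x F)" "z \<notin> cspan (insert x' F)"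
      using z cspan_mono [of "insert x F" "insert x (insert x' F)"]
        cspan_mono [of "insert x' F" "insert x (insert x' F)"] by blast+
    then show ?thesis using same [OF x] same [OF x'] by (metis (no_types))
  qed
  obtain x0 where x0: "x0 \<notin> cspan F" using not_complex_finite_dim_imp_notin_cspan [OF inf F] by blast
  have "A x - lam x0 *\<^sub>C x \<in> cspan F" for x
  proof (cases "x \<in> cspan F")
    case False
    then show ?thesis using lam [OF False] const [OF False x0] by simp
  next
    case True
    then have "x + x0 \<notin> cspan F" by (rule cspan_add_notin [OF _ x0])
    then have "A (x + x0) - lam x0 *\<^sub>C (x + x0) \<in> cspan F"
      using lam [of "x + x0"] const [of "x + x0" x0] x0 by simp
    then have "(A (x + x0) - lam x0 *\<^sub>C (x + x0)) - (A x0 - lam x0 *\<^sub>C x0) \<in> cspan F"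
      using lam [OF x0] by (rule cspan_diff)
    then show ?thesis by (simp add: BX_add [OF A] scaleC_add_right)
  qed
  then show ?thesis by blast
qed

lemma not_rank_one_large_jordan_core:
  fixes A :: "'a::complex_banach \<Rightarrow> 'a"
  assumes A: "A \<in> BX" and inf: "\<not> complex_finite_dim TYPE('a)"
    and y1: "A x1 \<noteq> 0" and y2: "A x2 \<notin> cspan {A x1}"
  shows "\<exists>K\<in>jordan_cores A. \<not> spanned_by_at_most 4 K"
proof (cases "\<exists>u v. good_pair A u v")
  case True
  then obtain u v where "good_pair A u v" by blast
  then show ?thesis by (rule good_pair_large_jordan_core [OF A])
next
  case False
  then have no_good: "\<And>u v. \<not> good_pair A u v" by blast
  obtain F where F: "finite F" "\<And>x. x \<notin> cspan F \<Longrightarrow> \<exists>c. A x - c *\<^sub>C x \<in> cspan F"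
    using no_good_pair_locally_scalar [OF A no_good] by blast
  obtain \<mu> where \<mu>: "\<And>x. A x - \<mu> *\<^sub>C x \<in> cspan F"
    using locally_scalar_imp_scalar_plus_finite_rank [OF A inf F] by blast
  show ?thesis
  proof (cases "\<mu> = 0")
    case True
    then have "A x \<in> cspan F" for x using \<mu> [of x] by simp
    from finite_rank_good_pair [OF A inf F(1) this y1 y2] no_good show ?thesis by blast
  qed (rule scalar_plus_finite_rank_large_jordan_core [OF A inf F(1) \<mu>])
qed

lemma jordan_cores_zero:
  assumes "K \<in> jordan_cores (\<lambda>x::'a::complex_banach. 0)" shows "K = {0}"
proof -
  obtain R where "R \<in> BX" "K = analytic_core (\<lambda>x::'a. 0 + R 0)"
    using assms unfolding jordan_cores_def by blast
  then show ?thesis using BX_zero [OF \<open>R \<in> BX\<close>] analytic_core_zero by simp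
qed

lemma rank_one_if_range_in_line:
  assumes A: "A \<in> BX" and "A x1 \<noteq> 0" and range: "\<And>x. A x \<in> cspan {A x1}"
  shows "rank_one A"
proof -
  have "c *\<^sub>C A x1 \<in> range A" for c
    using BX_scaleC [OF A, of c x1] by (metis rangeI)
  then have "cspan {A x1} \<subseteq> range A"
    unfolding cspan_singleton by blast
  then have "range A = cspan {A x1}" using range by blast
  then show ?thesis unfolding rank_one_iff_cspan using \<open>A x1 \<noteq> 0\<close> by blast
qed

lemma small_jordan_cores_iff_rank_one:
  fixes A :: "'a::complex_banach \<Rightarrow> 'a"
  assumes A: "A \<in> BX" and inf: "\<not> complex_finite_dim TYPE('a)"
  shows "small_jordan_cores A \<longleftrightarrow> rank_one A"
proof
  assume "rank_one A"
  then show "small_jordan_cores A"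
    unfolding small_jordan_cores_def
    using jordan_cores_rank_one_nontrivial [OF A] jordan_cores_rank_one_small by blast
next
  assume small: "small_jordan_cores A"
  have "A \<noteq> (\<lambda>x. 0)"
    using small jordan_cores_zero unfolding small_jordan_cores_def by blast
  then obtain x1 where x1: "A x1 \<noteq> 0" by blast
  show "rank_one A"
  proof (rule ccontr)
    assume "\<not> rank_one A"
    then obtain x2 where "A x2 \<notin> cspan {A x1}"
      using rank_one_if_range_in_line [OF A x1] by blast
    then show False
      using not_rank_one_large_jordan_core [OF A inf x1] small unfolding small_jordan_cores_def by blast
  qed
qed

lemma jordan_cores_eq_if_preserved:
  assumes maps: "\<forall>T\<in>BX. \<phi> T \<in> BX"
    and surj: "\<forall>S\<in>BX. \<exists>T\<in>BX. \<phi> T = S"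
    and pres: "\<forall>T\<in>BX. \<forall>S\<in>BX.
      analytic_core (\<lambda>x. \<phi> T (\<phi> S x) + \<phi> S (\<phi> T x)) = analytic_core (\<lambda>x. T (S x) + S (T x))"
    and F: "F \<in> BX"
  shows "jordan_cores (\<phi> F) = jordan_cores F"
proof
  show "jordan_cores (\<phi> F) \<subseteq> jordan_cores F"
  proof
    fix K assume "K \<in> jordan_cores (\<phi> F)"
    then obtain R where R: "R \<in> BX" "K = analytic_core (\<lambda>x. \<phi> F (R x) + R (\<phi> F x))"
      unfolding jordan_cores_def by blast
    then obtain S where S: "S \<in> BX" "\<phi> S = R" using surj by blast
    then have "K = analytic_core (\<lambda>x. F (S x) + S (F x))" using R(2) pres F by blast
    then show "K \<in> jordan_cores F" using jordan_coresI [OF S(1), of F] by simp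
  qed
  show "jordan_cores F \<subseteq> jordan_cores (\<phi> F)"
  proof
    fix K assume "K \<in> jordan_cores F"
    then obtain S where S: "S \<in> BX" "K = analytic_core (\<lambda>x. F (S x) + S (F x))"
      unfolding jordan_cores_def by blast
    then have "K = analytic_core (\<lambda>x. \<phi> F (\<phi> S x) + \<phi> S (\<phi> F x))" using pres F by simp
    moreover have "\<phi> S \<in> BX" using maps S(1) by blast
    ultimately show "K \<in> jordan_cores (\<phi> F)" using jordan_coresI [of "\<phi> S" "\<phi> F"] by simp
  qed
qed

theorem mainTheorem6:
  fixes \<phi> :: "('a::complex_banach \<Rightarrow> 'a) \<Rightarrow> ('a \<Rightarrow> 'a)"
  assumes inf_dim: "\<not> complex_finite_dim TYPE('a)"
    and maps: "\<forall>T\<in>BX. \<phi> T \<in> BX"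
    and surj: "\<forall>S\<in>BX. \<exists>T\<in>BX. \<phi> T = S"
    and pres: "\<forall>T\<in>BX. \<forall>S\<in>BX.
      analytic_core (\<lambda>x. \<phi> T (\<phi> S x) + \<phi> S (\<phi> T x)) = analytic_core (\<lambda>x. T (S x) + S (T x))"
    and F: "F \<in> BX"
  shows "rank_one (\<phi> F) \<longleftrightarrow> rank_one F"
proof -
  have "\<phi> F \<in> BX" using maps F by blast
  then have "rank_one (\<phi> F) \<longleftrightarrow> small_jordan_cores (\<phi> F)"
    using small_jordan_cores_iff_rank_one inf_dim by blast
  also have "\<dots> \<longleftrightarrow> small_jordan_cores F"
    unfolding small_jordan_cores_def jordan_cores_eq_if_preserved [OF maps surj pres F] ..
  also have "\<dots> \<longleftrightarrow> rank_one F"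
    using small_jordan_cores_iff_rank_one [OF F inf_dim] .
  finally show ?thesis .
qed

end
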